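(* Let $\alpha,\beta,\gamma\in C^\infty(\mathbb R)$ and, for $\phi\in C^\infty(\mathbb R)$, let $Q_\phi=\sum_{n\ge0}\hbar^{2n}\frac{\alpha(u)^n\phi^{(n)}(u)}{n!}u_x^{2n+1}$. Then the flows $u_{\tau_\beta}=Q_\beta$ and $u_{\tau_\gamma}=Q_\gamma$ commute, i.e. $Q_\beta'[Q_\gamma]-Q_\gamma'[Q_\beta]=0$ as formal series in $\hbar$.
   Context: $u_k=\partial_x^ku$; total derivative $D=\sum_{r\ge0}u_{r+1}\partial/\partial u_r$ ($u_0=u$); Fréchet derivative $P'[V]=\sum_{r\ge0}\frac{\partial P}{\partial u_r}D^rV$, extended coefficientwise to formal series in the formal parameter $\hbar$. $\phi^{(n)}$ is the $n$-th derivative. *)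

theory Defs
  imports "HOL-Analysis.Analysis"
begin

text \<open>Jet space: a point is a sequence u with u r = u_r (u_0 = u).
  A formal series in hbar is its coefficient sequence nat \<Rightarrow> jet function.\<close>

type_synonym jetfun = "(nat \<Rightarrow> real) \<Rightarrow> real"

definition smooth_real :: "(real \<Rightarrow> real) \<Rightarrow> bool" where
  "smooth_real f \<longleftrightarrow> (\<forall>n x. (deriv ^^ n) f differentiable (at x))"

definition jet_partial :: "nat \<Rightarrow> jetfun \<Rightarrow> jetfun" where
  "jet_partial r P = (\<lambda>u. deriv (\<lambda>t. P (u(r := t))) (u r))"

text \<open>Total derivative D = sum_r u_{r+1} d/du_r, truncated at order N
  (exact for differential functions depending only on u_0..u_N).\<close>
definition jet_D :: "nat \<Rightarrow> jetfun \<Rightarrow> jetfun" where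
  "jet_D N P = (\<lambda>u. \<Sum>r\<le>N. u (Suc r) * jet_partial r P u)"

text \<open>Iterated total derivative D^r V for V of order at most N (D^r V has order N + r).\<close>
fun jet_Diter :: "nat \<Rightarrow> nat \<Rightarrow> jetfun \<Rightarrow> jetfun" where
  "jet_Diter N 0 V = V"
| "jet_Diter N (Suc r) V = jet_D (N + r) (jet_Diter N r V)"

definition frechet :: "nat \<Rightarrow> jetfun \<Rightarrow> jetfun \<Rightarrow> jetfun" where
  "frechet N P V = (\<lambda>u. \<Sum>r\<le>N. jet_partial r P u * jet_Diter N r V u)"

definition series_frechet :: "nat \<Rightarrow> (nat \<Rightarrow> jetfun) \<Rightarrow> (nat \<Rightarrow> jetfun) \<Rightarrow> nat \<Rightarrow> jetfun" where
  "series_frechet N P V m = (\<lambda>u. \<Sum>i\<le>m. frechet N (P i) (V (m - i)) u)"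

text \<open>Q_phi = sum_n hbar^(2n) alpha(u)^n phi^(n)(u) / n! u_x^(2n+1), as coefficient sequence.\<close>
definition Qser :: "(real \<Rightarrow> real) \<Rightarrow> (real \<Rightarrow> real) \<Rightarrow> nat \<Rightarrow> jetfun" where
  "Qser \<alpha> \<phi> k = (\<lambda>u. if even k then
       \<alpha> (u 0) ^ (k div 2) * (deriv ^^ (k div 2)) \<phi> (u 0) / fact (k div 2) * u 1 ^ (k + 1)
     else 0)"

end

theory Submission
  imports Defs
begin

text \<open>Every coefficient of \<open>Q\<^sub>\<phi>\<close> is a first-order monomial \<open>c\<^sub>k(u) u\<^sub>x\<^sup>k\<^sup>+\<^sup>1\<close>. For two such
  monomials the \<open>u\<^sub>x\<^sub>x\<close>-terms of the Frechet commutator cancel, so the \<open>\<hbar>\<^sup>m\<close>-coefficient of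
  \<open>Q\<^sub>\<beta>'[Q\<^sub>\<gamma>] - Q\<^sub>\<gamma>'[Q\<^sub>\<beta>]\<close> is \<open>u\<^sub>x\<^sup>m\<^sup>+\<^sup>2 \<Sum>\<^sub>i\<^sub>+\<^sub>j\<^sub>=\<^sub>m (i c\<^sub>i d\<^sub>j' - j c\<^sub>i' d\<^sub>j)\<close>.
  For the coefficients of \<open>Q\<^sub>\<phi>\<close> one has \<open>k c\<^sub>k = 2\<alpha> E\<^sub>k\<close> and \<open>c\<^sub>k' = \<alpha>' E\<^sub>k + E\<^sub>k\<^sub>+\<^sub>2\<close>, where
  \<open>E\<close> is the coefficient sequence of \<open>\<hbar>\<^sup>2 Q\<^sub>\<phi>\<^sub>'\<close>; substituting, the \<open>\<alpha>'\<close>-terms cancel and the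
  remaining sum telescopes.\<close>

definition jet_monomial :: "(real \<Rightarrow> real) \<Rightarrow> nat \<Rightarrow> jetfun" where
  "jet_monomial c e = (\<lambda>u. c (u 0) * u 1 ^ e)"

lemma sum_atMost_eq_first_two:
  fixes g :: "nat \<Rightarrow> 'a::comm_monoid_add"
  assumes "1 \<le> N" and "\<And>r. 2 \<le> r \<Longrightarrow> g r = 0"
  shows "(\<Sum>r\<le>N. g r) = g 0 + g 1"
proof -
  have "(\<Sum>r\<le>N. g r) = (\<Sum>r\<le>1. g r)"
    using assms by (intro sum.mono_neutral_right) auto
  then show ?thesis by simp
qed

lemma jet_D_first_order:
  assumes "1 \<le> N" and "\<And>r. 2 \<le> r \<Longrightarrow> jet_partial r V u = 0"
  shows "jet_D N V u = u 1 * jet_partial 0 V u + u 2 * jet_partial 1 V u"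
  unfolding jet_D_def using assms by (subst sum_atMost_eq_first_two) (simp_all add: numeral_2_eq_2)

lemma frechet_first_order:
  assumes "1 \<le> N" and "\<And>r. 2 \<le> r \<Longrightarrow> jet_partial r P u = 0"
  shows "frechet N P V u = jet_partial 0 P u * V u + jet_partial 1 P u * jet_D N V u"
  unfolding frechet_def using assms by (subst sum_atMost_eq_first_two) simp_all

lemma jet_partial_0_monomial:
  assumes "c differentiable at (u 0)"
  shows "jet_partial 0 (jet_monomial c e) u = deriv c (u 0) * u 1 ^ e"
proof -
  have "((\<lambda>t. c t * u 1 ^ e) has_real_derivative deriv c (u 0) * u 1 ^ e) (at (u 0))"
    using assms by (auto intro: DERIV_cmult_right simp: DERIV_deriv_iff_real_differentiable)
  then show ?thesis
    unfolding jet_partial_def jet_monomial_def by (simp add: DERIV_imp_deriv)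
qed

lemma jet_partial_1_monomial:
  "jet_partial 1 (jet_monomial c e) u = c (u 0) * real e * u 1 ^ (e - 1)"
proof -
  have "((\<lambda>t. c (u 0) * t ^ e) has_real_derivative c (u 0) * (real e * u 1 ^ (e - 1))) (at (u 1))"
    by (auto intro!: derivative_eq_intros)
  then show ?thesis
    unfolding jet_partial_def jet_monomial_def by (simp add: DERIV_imp_deriv mult.assoc)
qed

lemma jet_partial_monomial_eq_0:
  "2 \<le> r \<Longrightarrow> jet_partial r (jet_monomial c e) u = 0"
  unfolding jet_partial_def jet_monomial_def by simp

lemma jet_D_monomial:
  assumes "1 \<le> N" and "c differentiable at (u 0)"
  shows "jet_D N (jet_monomial c e) u = u 1 * deriv c (u 0) * u 1 ^ e + u 2 * c (u 0) * real e * u 1 ^ (e - 1)"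
proof -
  have "jet_D N (jet_monomial c e) u
      = u 1 * jet_partial 0 (jet_monomial c e) u + u 2 * jet_partial 1 (jet_monomial c e) u"
    using assms(1) jet_partial_monomial_eq_0 by (rule jet_D_first_order)
  then show ?thesis
    using assms(2) by (simp only: jet_partial_0_monomial jet_partial_1_monomial mult.assoc)
qed

lemma frechet_monomial:
  assumes "1 \<le> N" and "c differentiable at (u 0)"
  shows "frechet N (jet_monomial c e) V u
           = deriv c (u 0) * u 1 ^ e * V u + c (u 0) * real e * u 1 ^ (e - 1) * jet_D N V u"
proof -
  have "frechet N (jet_monomial c e) V u
      = jet_partial 0 (jet_monomial c e) u * V u + jet_partial 1 (jet_monomial c e) u * jet_D N V u"
    using assms(1) jet_partial_monomial_eq_0 by (rule frechet_first_order)
  then show ?thesis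
    using assms(2) by (simp only: jet_partial_0_monomial jet_partial_1_monomial)
qed

lemma frechet_monomial_commutator:
  assumes "1 \<le> N" and "c differentiable at (u 0)" and "d differentiable at (u 0)"
  shows "frechet N (jet_monomial c (Suc i)) (jet_monomial d (Suc j)) u
           - frechet N (jet_monomial d (Suc j)) (jet_monomial c (Suc i)) u
         = u 1 ^ (i + j + 2) * (real i * c (u 0) * deriv d (u 0) - real j * deriv c (u 0) * d (u 0))"
  unfolding frechet_monomial[where u=u, OF assms(1,2)] frechet_monomial[where u=u, OF assms(1,3)]
    jet_D_monomial[where u=u, OF assms(1,2)] jet_D_monomial[where u=u, OF assms(1,3)]
  by (simp add: jet_monomial_def algebra_simps power_add)

lemma series_frechet_commutator_monomials:
  assumes "1 \<le> N" and "\<And>k. c k differentiable at (u 0)" and "\<And>k. d k differentiable at (u 0)"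
  defines "P \<equiv> \<lambda>k. jet_monomial (c k) (Suc k)" and "V \<equiv> \<lambda>k. jet_monomial (d k) (Suc k)"
  shows "series_frechet N P V m u - series_frechet N V P m u
         = u 1 ^ (m + 2) * (\<Sum>i\<le>m. real i * c i (u 0) * deriv (d (m - i)) (u 0)
                                    - real (m - i) * deriv (c i) (u 0) * d (m - i) (u 0))"
proof -
  have "series_frechet N V P m u = (\<Sum>i\<le>m. frechet N (V (m - i)) (P i) u)"
    unfolding series_frechet_def
    by (rule sum.reindex_bij_witness[where i="\<lambda>i. m - i" and j="\<lambda>i. m - i"]) auto
  then have "series_frechet N P V m u - series_frechet N V P m u
      = (\<Sum>i\<le>m. frechet N (P i) (V (m - i)) u - frechet N (V (m - i)) (P i) u)"
    by (simp add: series_frechet_def sum_subtractf)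
  also have "\<dots> = (\<Sum>i\<le>m. u 1 ^ (m + 2) * (real i * c i (u 0) * deriv (d (m - i)) (u 0)
                                    - real (m - i) * deriv (c i) (u 0) * d (m - i) (u 0)))"
    by (intro sum.cong refl)
      (simp add: P_def V_def frechet_monomial_commutator[where u=u, OF assms(1-3)])
  finally show ?thesis
    by (simp add: sum_distrib_left)
qed

lemma sum_telescope_2:
  fixes f :: "nat \<Rightarrow> 'a::ab_group_add"
  shows "(\<Sum>i\<le>m. f i - f (i + 2)) = f 0 + f 1 - f (m + 1) - f (m + 2)"
proof -
  have "(\<Sum>i\<le>m. f i - f (i + 2)) = (\<Sum>i\<le>m. f i - f (Suc i)) + (\<Sum>i\<le>m. f (Suc i) - f (Suc (Suc i)))"
    by (simp flip: sum.distrib)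
  also have "\<dots> = f 0 + f 1 - f (m + 1) - f (m + 2)"
    by (simp only: sum_telescope[of f] sum_telescope[of "\<lambda>i. f (Suc i)"]) simp
  finally show ?thesis .
qed

text \<open>Each summand equals \<open>p (E\<^sub>i F\<^sub>m\<^sub>-\<^sub>i\<^sub>+\<^sub>2 - E\<^sub>i\<^sub>+\<^sub>2 F\<^sub>m\<^sub>-\<^sub>i)\<close>, so the sum telescopes.\<close>
lemma convolution_commutator_eq_0:
  fixes c c' d d' E F :: "nat \<Rightarrow> real" and p q :: real
  assumes c: "\<And>k. real k * c k = p * E k" and c': "\<And>k. c' k = q * E k + E (k + 2)"
    and d: "\<And>k. real k * d k = p * F k" and d': "\<And>k. d' k = q * F k + F (k + 2)"
    and "E 0 = 0" and "E 1 = 0" and "F 0 = 0" and "F 1 = 0"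
  shows "(\<Sum>i\<le>m. real i * c i * d' (m - i) - real (m - i) * c' i * d (m - i)) = 0"
proof -
  define f where "f i = E i * F (m + 2 - i)" for i
  have "real i * c i * d' (m - i) - real (m - i) * c' i * d (m - i) = p * (f i - f (i + 2))"
    if "i \<le> m" for i
  proof -
    have "real i * c i * d' (m - i) - real (m - i) * c' i * d (m - i)
        = (real i * c i) * d' (m - i) - c' i * (real (m - i) * d (m - i))"
      by (simp only: ac_simps)
    also have "\<dots> = p * E i * (q * F (m - i) + F (m - i + 2)) - (q * E i + E (i + 2)) * (p * F (m - i))"
      by (simp only: c d c' d')
    also have "\<dots> = p * (f i - f (i + 2))"
      using that by (simp add: f_def algebra_simps Suc_diff_le)
    finally show ?thesis .
  qed
  then have "(\<Sum>i\<le>m. real i * c i * d' (m - i) - real (m - i) * c' i * d (m - i))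
      = p * (\<Sum>i\<le>m. f i - f (i + 2))"
    by (simp add: sum_distrib_left)
  also have "\<dots> = 0"
    unfolding sum_telescope_2 using assms(5-8) by (simp add: f_def)
  finally show ?thesis .
qed

definition Q_coeff :: "(real \<Rightarrow> real) \<Rightarrow> (real \<Rightarrow> real) \<Rightarrow> nat \<Rightarrow> real \<Rightarrow> real" where
  "Q_coeff \<alpha> \<phi> k x =
     (if even k then \<alpha> x ^ (k div 2) * (deriv ^^ (k div 2)) \<phi> x / fact (k div 2) else 0)"

lemma Qser_eq_jet_monomial: "Qser \<alpha> \<phi> = (\<lambda>k. jet_monomial (Q_coeff \<alpha> \<phi> k) (Suc k))"
  by (simp add: Qser_def Q_coeff_def jet_monomial_def fun_eq_iff)

lemma Q_coeff_even: "Q_coeff \<alpha> \<phi> (2 * n) x = \<alpha> x ^ n * (deriv ^^ n) \<phi> x / fact n"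
  by (simp add: Q_coeff_def)

lemma Q_coeff_odd: "odd k \<Longrightarrow> Q_coeff \<alpha> \<phi> k = (\<lambda>x. 0)"
  by (simp add: Q_coeff_def fun_eq_iff)

lemma smooth_real_has_derivative:
  "smooth_real f \<Longrightarrow> ((deriv ^^ n) f has_real_derivative (deriv ^^ Suc n) f x) (at x)"
  unfolding smooth_real_def by (simp add: DERIV_deriv_iff_real_differentiable)

lemma Q_coeff_even_has_derivative:
  assumes "smooth_real \<alpha>" and "smooth_real \<phi>"
  shows "(Q_coeff \<alpha> \<phi> (2 * n) has_real_derivative
           (real n * \<alpha> x ^ (n - 1) * deriv \<alpha> x * (deriv ^^ n) \<phi> x + \<alpha> x ^ n * (deriv ^^ Suc n) \<phi> x)
           / fact n) (at x)"
proof -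
  have "(\<alpha> has_real_derivative deriv \<alpha> x) (at x)"
    using smooth_real_has_derivative[OF assms(1), of 0] by simp
  then show ?thesis
    unfolding Q_coeff_even[abs_def]
    by (auto intro!: derivative_eq_intros smooth_real_has_derivative[OF assms(2)] simp: field_simps)
qed

lemma Q_coeff_relations:
  fixes x :: real
  assumes "smooth_real \<alpha>" and "smooth_real \<phi>"
  defines "E \<equiv> \<lambda>k. if k < 2 then 0 else Q_coeff \<alpha> (deriv \<phi>) (k - 2) x"
  shows "real k * Q_coeff \<alpha> \<phi> k x = 2 * \<alpha> x * E k"
    and "(Q_coeff \<alpha> \<phi> k has_real_derivative deriv \<alpha> x * E k + E (k + 2)) (at x)"
proof -
  have shift: "(deriv ^^ n) (deriv \<phi>) = (deriv ^^ Suc n) \<phi>" for n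
    by (simp only: funpow_Suc_right comp_def)
  consider "odd k" | "k = 0" | n where "k = 2 * Suc n"
    by (metis evenE mult_0_right not0_implies_Suc)
  then have "real k * Q_coeff \<alpha> \<phi> k x = 2 * \<alpha> x * E k
      \<and> (Q_coeff \<alpha> \<phi> k has_real_derivative deriv \<alpha> x * E k + E (k + 2)) (at x)"
  proof cases
    case 1
    then show ?thesis by (simp add: E_def Q_coeff_odd)
  next
    case 2
    then show ?thesis
      using Q_coeff_even_has_derivative[OF assms(1,2), of 0 x] by (simp add: E_def Q_coeff_def)
  next
    case 3
    have Ek: "E k = real (Suc n) * \<alpha> x ^ n * (deriv ^^ Suc n) \<phi> x / fact (Suc n)"
      using 3 by (simp add: E_def Q_coeff_def shift)
    have Ek2: "E (k + 2) = \<alpha> x ^ Suc n * (deriv ^^ Suc (Suc n)) \<phi> x / fact (Suc n)"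
      using 3 by (simp add: E_def Q_coeff_def shift)
    have "(Q_coeff \<alpha> \<phi> k has_real_derivative
        (real (Suc n) * \<alpha> x ^ n * deriv \<alpha> x * (deriv ^^ Suc n) \<phi> x
          + \<alpha> x ^ Suc n * (deriv ^^ Suc (Suc n)) \<phi> x) / fact (Suc n)) (at x)"
      using Q_coeff_even_has_derivative[OF assms(1,2), of "Suc n" x] 3 by simp
    then have "(Q_coeff \<alpha> \<phi> k has_real_derivative deriv \<alpha> x * E k + E (k + 2)) (at x)"
      by (rule DERIV_cong) (simp only: Ek Ek2 add_divide_distrib, simp)
    moreover have "real k * Q_coeff \<alpha> \<phi> k x = 2 * \<alpha> x * E k"
      unfolding Ek unfolding 3 Q_coeff_even by (simp add: field_simps)
    ultimately show ?thesis by simp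
  qed
  then show "real k * Q_coeff \<alpha> \<phi> k x = 2 * \<alpha> x * E k"
    and "(Q_coeff \<alpha> \<phi> k has_real_derivative deriv \<alpha> x * E k + E (k + 2)) (at x)"
    by auto
qed

theorem mainTheorem7:
  fixes \<alpha> \<beta> \<gamma> :: "real \<Rightarrow> real" and N :: nat
  assumes "smooth_real \<alpha>" and "smooth_real \<beta>" and "smooth_real \<gamma>" and "1 \<le> N"
  shows "\<forall>m u. series_frechet N (Qser \<alpha> \<beta>) (Qser \<alpha> \<gamma>) m u
                 - series_frechet N (Qser \<alpha> \<gamma>) (Qser \<alpha> \<beta>) m u = 0"
proof (intro allI)
  fix m and u :: "nat \<Rightarrow> real"
  define E where "E \<phi> k = (if k < 2 then 0 else Q_coeff \<alpha> (deriv \<phi>) (k - 2) (u 0))" for \<phi> k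
  note \<beta>_rel = Q_coeff_relations[OF assms(1,2), where x="u 0", folded E_def]
  note \<gamma>_rel = Q_coeff_relations[OF assms(1,3), where x="u 0", folded E_def]
  have "series_frechet N (Qser \<alpha> \<beta>) (Qser \<alpha> \<gamma>) m u - series_frechet N (Qser \<alpha> \<gamma>) (Qser \<alpha> \<beta>) m u
      = u 1 ^ (m + 2) * (\<Sum>i\<le>m. real i * Q_coeff \<alpha> \<beta> i (u 0) * deriv (Q_coeff \<alpha> \<gamma> (m - i)) (u 0)
                                 - real (m - i) * deriv (Q_coeff \<alpha> \<beta> i) (u 0) * Q_coeff \<alpha> \<gamma> (m - i) (u 0))"
    unfolding Qser_eq_jet_monomial using assms(4) \<beta>_rel(2) \<gamma>_rel(2)
    by (intro series_frechet_commutator_monomials) (auto simp: real_differentiable_def)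
  also have "\<dots> = 0"
    by (subst convolution_commutator_eq_0[where E="E \<beta>" and F="E \<gamma>" and p="2 * \<alpha> (u 0)" and q="deriv \<alpha> (u 0)"])
      (simp_all add: \<beta>_rel(1) \<gamma>_rel(1) DERIV_imp_deriv[OF \<beta>_rel(2)] DERIV_imp_deriv[OF \<gamma>_rel(2)] E_def)
  finally show "series_frechet N (Qser \<alpha> \<beta>) (Qser \<alpha> \<gamma>) m u - series_frechet N (Qser \<alpha> \<gamma>) (Qser \<alpha> \<beta>) m u = 0" .
qed

end
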